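(* The class of directed Linear aTAM systems is not intrinsically universal: there is no finite 1D tile set $U$ (and temperature $\tau'$) with computable $\mathcal{R},S$ such that every directed Linear aTAM system $\mathcal{T}$ is simulated, at some scale $m$ under $\mathcal{R}(\mathcal{T})$, by the Linear aTAM system $(U,S(\mathcal{T}),\tau')$.
   Context: 1D aTAM: a tile type has a west glue and an east glue, each a pair (finite string label, nonnegative integer strength); a tile set is finite. Assemblies are partial functions $\alpha:\mathbb{Z}\dashrightarrow T$ with nonempty interval domain; adjacent tiles interact if the east glue of the left equals the west glue of the right with positive strength; $\alpha$ is $\tau$-stable if every cut between consecutive tiles has strength $\ge\tau$. A system $\mathcal{T}=(T,\sigma,\tau)$ has finite $\tau$-stable seed $\sigma$; growth is by single $\tau$-stable tile additions (finite or infinite sequences, result = limit). The Linear aTAM additionally requires that a tile can be added at empty location $p$ only if there is a path in $\mathbb{Z}$ from $p$ to a point outside the minimal bounding interval of the current assembly avoiding its domain. $\mathcal{A}[\mathcal{T}]$ are producible assemblies, $\mathcal{A}_\Box[\mathcal{T}]$ the producible ones admitting no further tile; $\mathcal{T}$ is directed if $|\mathcal{A}_\Box[\mathcal{T}]|=1$. Simulation: an $m$-block over $S$ is a partial function $\{0,\dots,m-1\}\dashrightarrow S$; $\alpha^m_x$ is $i\mapsto\alpha(mx+i)$. A partial $R$ from $m$-blocks to $T$ is valid if $\alpha\sqsubseteq\beta$, $\alpha\in\mathrm{dom}R$ imply $R(\beta)=R(\alpha)$; $R^*(\alpha')$ is $x\mapsto R(\alpha'^m_x)$. $\alpha'$ maps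 cleanly if each nonempty block at $x$ has $x$ or $x\pm1$ in $\mathrm{dom}\,R^*(\alpha')$ (or at most one nonempty block). $\mathcal{S}$ simulates $\mathcal{T}$ under $R$ if: (i) $R^*$ maps $\mathcal{A}[\mathcal{S}]$ onto $\mathcal{A}[\mathcal{T}]$ and $\mathcal{A}_\Box[\mathcal{S}]$ onto $\mathcal{A}_\Box[\mathcal{T}]$, all producible assemblies mapping cleanly; (ii) producible $\alpha'\to^\mathcal{S}\beta'$ implies $R^*(\alpha')\to^\mathcal{T}R^*(\beta')$; (iii) for every $\alpha\in\mathcal{A}[\mathcal{T}]$ there is $\Pi\subset\mathcal{A}[\mathcal{S}]$ with $R^*=\alpha$ on $\Pi$ such that for every producible $\beta$ with $\alpha\to^\mathcal{T}\beta$: each $\alpha'\in\Pi$ produces some $\beta'$ with $R^*(\beta')=\beta$, and whenever producible $\alpha''\to^\mathcal{S}\beta'$ with $R^*(\alpha'')=\alpha$, $R^*(\beta')=\beta$, some $\alpha'\in\Pi$ produces $\alpha''$. *)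

theory Defs
  imports Main "HOL-Library.Nat_Bijection"
begin

type_synonym glue = "string \<times> nat"
type_synonym tile = "glue \<times> glue"
type_synonym assembly = "int \<Rightarrow> tile option"
type_synonym tsys = "tile set \<times> assembly \<times> nat" \<comment> \<open>(T, seed, temperature)\<close>

definition west :: "tile \<Rightarrow> glue" where "west t = fst t"
definition east :: "tile \<Rightarrow> glue" where "east t = snd t"

definition is_assembly :: "assembly \<Rightarrow> bool" where
  "is_assembly \<alpha> \<longleftrightarrow> dom \<alpha> \<noteq> {} \<and>
     (\<forall>x y z. x \<in> dom \<alpha> \<longrightarrow> z \<in> dom \<alpha> \<longrightarrow> x \<le> y \<longrightarrow> y \<le> z \<longrightarrow> y \<in> dom \<alpha>)"

definition bond :: "tile \<Rightarrow> tile \<Rightarrow> nat" where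
  "bond l r = (if east l = west r \<and> snd (east l) > 0 then snd (east l) else 0)"

definition stable :: "nat \<Rightarrow> assembly \<Rightarrow> bool" where
  "stable \<tau> \<alpha> \<longleftrightarrow> (\<forall>x l r. \<alpha> x = Some l \<longrightarrow> \<alpha> (x + 1) = Some r \<longrightarrow> bond l r \<ge> \<tau>)"

definition valid_sys :: "tsys \<Rightarrow> bool" where
  "valid_sys S \<longleftrightarrow> (case S of (T, \<sigma>, \<tau>) \<Rightarrow>
     finite T \<and> is_assembly \<sigma> \<and> finite (dom \<sigma>) \<and> ran \<sigma> \<subseteq> T \<and> stable \<tau> \<sigma>)"

definition bbox :: "assembly \<Rightarrow> int set" where
  "bbox \<alpha> = {y. \<exists>a b. a \<in> dom \<alpha> \<and> b \<in> dom \<alpha> \<and> a \<le> y \<and> y \<le> b}"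

text \<open>Linear aTAM restriction: a path in \<open>\<int>\<close> from \<open>p\<close> to a point outside the
  bounding interval that avoids the domain of the assembly.\<close>
definition linear_ok :: "assembly \<Rightarrow> int \<Rightarrow> bool" where
  "linear_ok \<alpha> p \<longleftrightarrow> (\<exists>q. q \<notin> bbox \<alpha> \<and>
      (\<forall>y. min p q \<le> y \<and> y \<le> max p q \<longrightarrow> y \<notin> dom \<alpha>))"

definition step :: "tsys \<Rightarrow> assembly \<Rightarrow> assembly \<Rightarrow> bool" where
  "step S \<alpha> \<beta> \<longleftrightarrow> (case S of (T, \<sigma>, \<tau>) \<Rightarrow>
     (\<exists>p t. t \<in> T \<and> \<alpha> p = None \<and> linear_ok \<alpha> p \<and> \<beta> = \<alpha>(p \<mapsto> t) \<and>
            is_assembly \<beta> \<and> stable \<tau> \<beta>))"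

definition lim_seq :: "(nat \<Rightarrow> assembly) \<Rightarrow> assembly" where
  "lim_seq f x = (if \<exists>i. f i x \<noteq> None then f (SOME i. f i x \<noteq> None) x else None)"

text \<open>\<open>produces S \<alpha> \<beta>\<close>: \<open>\<beta>\<close> is the result of a finite or infinite sequence of
  single tile additions starting at \<open>\<alpha>\<close> (finite sequences are represented by
  stuttering).\<close>
definition produces :: "tsys \<Rightarrow> assembly \<Rightarrow> assembly \<Rightarrow> bool" where
  "produces S \<alpha> \<beta> \<longleftrightarrow> (\<exists>f. f 0 = \<alpha> \<and> (\<forall>i. f (Suc i) = f i \<or> step S (f i) (f (Suc i)))
                             \<and> \<beta> = lim_seq f)"

definition producible :: "tsys \<Rightarrow> assembly \<Rightarrow> bool" where
  "producible S \<alpha> \<longleftrightarrow> produces S (fst (snd S)) \<alpha>"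

definition terminal :: "tsys \<Rightarrow> assembly \<Rightarrow> bool" where
  "terminal S \<alpha> \<longleftrightarrow> producible S \<alpha> \<and> \<not> (\<exists>\<beta>. step S \<alpha> \<beta>)"

definition directed :: "tsys \<Rightarrow> bool" where
  "directed S \<longleftrightarrow> valid_sys S \<and> card {\<alpha>. terminal S \<alpha>} = 1"

type_synonym block = "tile option list"   \<comment> \<open>an m-block, as a list of length m\<close>
type_synonym rep = "block \<Rightarrow> tile option"

definition mblock :: "nat \<Rightarrow> assembly \<Rightarrow> int \<Rightarrow> block" where
  "mblock m \<alpha> x = map (\<lambda>i. \<alpha> (int m * x + int i)) [0..<m]"

definition block_le :: "block \<Rightarrow> block \<Rightarrow> bool" where
  "block_le a b \<longleftrightarrow> length a = length b \<and>
     (\<forall>i < length a. a ! i \<noteq> None \<longrightarrow> b ! i = a ! i)"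

definition blocks_over :: "nat \<Rightarrow> tile set \<Rightarrow> block set" where
  "blocks_over m U = {b. length b = m \<and> (\<forall>i < m. \<forall>t. b ! i = Some t \<longrightarrow> t \<in> U)}"

definition valid_rep :: "tile set \<Rightarrow> nat \<Rightarrow> rep \<Rightarrow> bool" where
  "valid_rep U m R \<longleftrightarrow> dom R \<subseteq> blocks_over m U \<and>
     (\<forall>a b. a \<in> dom R \<longrightarrow> b \<in> blocks_over m U \<longrightarrow> block_le a b \<longrightarrow> R b = R a)"

definition Rstar :: "nat \<Rightarrow> rep \<Rightarrow> assembly \<Rightarrow> assembly" where
  "Rstar m R \<alpha>' = (\<lambda>x. R (mblock m \<alpha>' x))"

definition nonempty_block :: "nat \<Rightarrow> assembly \<Rightarrow> int \<Rightarrow> bool" where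
  "nonempty_block m \<alpha>' x \<longleftrightarrow> (\<exists>i < m. \<alpha>' (int m * x + int i) \<noteq> None)"

definition maps_cleanly :: "nat \<Rightarrow> rep \<Rightarrow> assembly \<Rightarrow> bool" where
  "maps_cleanly m R \<alpha>' \<longleftrightarrow>
     (\<forall>x. nonempty_block m \<alpha>' x \<longrightarrow>
        (\<exists>y \<in> {x - 1, x, x + 1}. y \<in> dom (Rstar m R \<alpha>'))) \<or>
     (\<forall>x y. nonempty_block m \<alpha>' x \<longrightarrow> nonempty_block m \<alpha>' y \<longrightarrow> x = y)"

definition simulates :: "tsys \<Rightarrow> tsys \<Rightarrow> nat \<Rightarrow> rep \<Rightarrow> bool" where
  "simulates Ssim Tsim m R \<longleftrightarrow>
     0 < m \<and> valid_rep (fst Ssim) m R \<and>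
     \<comment> \<open>(i) equivalent production\<close>
     Rstar m R ` {\<alpha>'. producible Ssim \<alpha>'} = {\<alpha>. producible Tsim \<alpha>} \<and>
     Rstar m R ` {\<alpha>'. terminal Ssim \<alpha>'} = {\<alpha>. terminal Tsim \<alpha>} \<and>
     (\<forall>\<alpha>'. producible Ssim \<alpha>' \<longrightarrow> maps_cleanly m R \<alpha>') \<and>
     \<comment> \<open>(ii) T follows S\<close>
     (\<forall>\<alpha>' \<beta>'. producible Ssim \<alpha>' \<longrightarrow> produces Ssim \<alpha>' \<beta>' \<longrightarrow>
        produces Tsim (Rstar m R \<alpha>') (Rstar m R \<beta>')) \<and>
     \<comment> \<open>(iii) S models T\<close>
     (\<forall>\<alpha>. producible Tsim \<alpha> \<longrightarrow>
        (\<exists>\<Pi>. \<Pi> \<subseteq> {\<alpha>'. producible Ssim \<alpha>'} \<and> (\<forall>\<alpha>' \<in> \<Pi>. Rstar m R \<alpha>' = \<alpha>) \<and>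
           (\<forall>\<beta>. producible Tsim \<beta> \<longrightarrow> produces Tsim \<alpha> \<beta> \<longrightarrow>
              (\<forall>\<alpha>' \<in> \<Pi>. \<exists>\<beta>'. produces Ssim \<alpha>' \<beta>' \<and> Rstar m R \<beta>' = \<beta>) \<and>
              (\<forall>\<alpha>'' \<beta>'. producible Ssim \<alpha>'' \<longrightarrow> produces Ssim \<alpha>'' \<beta>' \<longrightarrow>
                  Rstar m R \<alpha>'' = \<alpha> \<longrightarrow> Rstar m R \<beta>' = \<beta> \<longrightarrow>
                  (\<exists>\<alpha>' \<in> \<Pi>. produces Ssim \<alpha>' \<alpha>'')))))"

datatype recf = Zero | Succ | Proj nat | Comp recf "recf list" | Prim recf recf | Mu recf

inductive reval :: "recf \<Rightarrow> nat list \<Rightarrow> nat \<Rightarrow> bool" where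
  zero: "reval Zero xs 0"
| succ: "reval Succ (x # xs) (Suc x)"
| proj: "i < length xs \<Longrightarrow> reval (Proj i) xs (xs ! i)"
| comp: "length ys = length gs \<Longrightarrow> (\<forall>i < length gs. reval (gs ! i) xs (ys ! i)) \<Longrightarrow>
         reval f ys z \<Longrightarrow> reval (Comp f gs) xs z"
| prim0: "reval g xs z \<Longrightarrow> reval (Prim g h) (0 # xs) z"
| primS: "reval (Prim g h) (n # xs) y \<Longrightarrow> reval h (y # n # xs) z \<Longrightarrow>
          reval (Prim g h) (Suc n # xs) z"
| mu: "reval f (n # xs) 0 \<Longrightarrow> (\<forall>k < n. \<exists>y. 0 < y \<and> reval f (k # xs) y) \<Longrightarrow>
       reval (Mu f) xs n"

definition string_code :: "string \<Rightarrow> nat" where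
  "string_code s = list_encode (map of_char s)"

definition glue_code :: "glue \<Rightarrow> nat" where
  "glue_code g = prod_encode (string_code (fst g), snd g)"

definition tile_code :: "tile \<Rightarrow> nat" where
  "tile_code t = prod_encode (glue_code (fst t), glue_code (snd t))"

definition tileset_code :: "tile set \<Rightarrow> nat" where
  "tileset_code T = set_encode (tile_code ` T)"

definition assembly_code :: "assembly \<Rightarrow> nat" where
  "assembly_code \<alpha> = set_encode ((\<lambda>x. prod_encode (int_encode x, tile_code (the (\<alpha> x)))) ` dom \<alpha>)"

definition sys_code :: "tsys \<Rightarrow> nat" where
  "sys_code S = (case S of (T, \<sigma>, \<tau>) \<Rightarrow>
      prod_encode (tileset_code T, prod_encode (assembly_code \<sigma>, \<tau>)))"

definition block_code :: "block \<Rightarrow> nat" where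
  "block_code b = list_encode (map (\<lambda>ot. case ot of None \<Rightarrow> 0 | Some t \<Rightarrow> Suc (tile_code t)) b)"

definition rep_code :: "nat \<times> rep \<Rightarrow> nat" where
  "rep_code mR = (case mR of (m, R) \<Rightarrow>
      prod_encode (m, set_encode {prod_encode (block_code b, tile_code t) | b t. R b = Some t}))"

definition computable_on_directed :: "(tsys \<Rightarrow> 'a) \<Rightarrow> ('a \<Rightarrow> nat) \<Rightarrow> bool" where
  "computable_on_directed F code \<longleftrightarrow>
     (\<exists>p. \<forall>S. directed S \<longrightarrow> reval p [sys_code S] (code (F S)))"

end

(* A Linear aTAM system over a tile set U that grows more than |U| positions to the right of
   where it started repeats a tile at two positions p < q of that stretch.  At the moment q is
   placed it is the rightmost tile, so the segment [p, q) can be copied again and again to the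
   right: every copy attaches at the outer end of the assembly, which the linear restriction
   always allows.  Let T be the directed system that grows a line of L = |U| + 3 tiles.  A
   simulator of T at scale m contains a producible assembly representing the seed tile alone; it
   maps cleanly, so it lies in blocks -1, 0, 1.  It can grow into a representation of the whole
   line, hence more than |U| positions beyond its start, so it can be pumped until it occupies
   block L + 1, and such an assembly maps cleanly onto no line of at most L tiles. *)

theory Submission
  imports Defs
begin

(* Tiles are nested pairs; keep the simplifier from splitting quantifiers over them. *)
declare split_paired_All [simp del] split_paired_Ex [simp del]

section \<open>Production as the limit of growth sequences\<close>

definition assembly_seq :: "tsys \<Rightarrow> (nat \<Rightarrow> assembly) \<Rightarrow> bool" where
  "assembly_seq S f \<longleftrightarrow> (\<forall>i. f (Suc i) = f i \<or> step S (f i) (f (Suc i)))"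

lemma produces_iff_assembly_seq:
  "produces S \<alpha> \<beta> \<longleftrightarrow> (\<exists>f. f 0 = \<alpha> \<and> assembly_seq S f \<and> \<beta> = lim_seq f)"
  unfolding produces_def assembly_seq_def by blast

lemma step_imp_upd: "step S \<alpha> \<beta> \<Longrightarrow> \<exists>p t. \<alpha> p = None \<and> \<beta> = \<alpha>(p \<mapsto> t)"
  unfolding step_def by (cases S) auto

lemma step_is_assembly: "step S \<alpha> \<beta> \<Longrightarrow> is_assembly \<beta>"
  unfolding step_def by (cases S) auto

lemma step_map_le: "step S \<alpha> \<beta> \<Longrightarrow> \<alpha> \<subseteq>\<^sub>m \<beta>"
  by (auto dest!: step_imp_upd simp: map_le_def)

lemma rtranclp_step_map_le: "(step S)\<^sup>*\<^sup>* \<alpha> \<beta> \<Longrightarrow> \<alpha> \<subseteq>\<^sub>m \<beta>"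
  by (induction rule: rtranclp_induct) (auto intro: map_le_trans step_map_le)

lemma rtranclp_step_is_assembly: "(step S)\<^sup>*\<^sup>* \<alpha> \<beta> \<Longrightarrow> is_assembly \<alpha> \<Longrightarrow> is_assembly \<beta>"
  by (induction rule: rtranclp_induct) (auto intro: step_is_assembly)

lemma assembly_seq_rtranclp:
  assumes "assembly_seq S f" "i \<le> j"
  shows "(step S)\<^sup>*\<^sup>* (f i) (f j)"
  using assms(2)
proof (induction j rule: dec_induct)
  case (step j)
  then show ?case
    using assms(1) unfolding assembly_seq_def by (metis rtranclp.rtrancl_into_rtrancl)
qed simp

lemma assembly_seq_map_le: "assembly_seq S f \<Longrightarrow> i \<le> j \<Longrightarrow> f i \<subseteq>\<^sub>m f j"
  using assembly_seq_rtranclp rtranclp_step_map_le by blast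

lemma lim_seq_eq_Some_iff:
  assumes "assembly_seq S f"
  shows "lim_seq f x = Some v \<longleftrightarrow> (\<exists>i. f i x = Some v)"
proof
  assume "lim_seq f x = Some v"
  then show "\<exists>i. f i x = Some v"
    unfolding lim_seq_def by (metis option.distinct(1))
next
  assume "\<exists>i. f i x = Some v"
  then obtain i where i: "f i x = Some v" ..
  define j where "j = (SOME j. f j x \<noteq> None)"
  have "f j x \<noteq> None"
    unfolding j_def using someI[where P = "\<lambda>j. f j x \<noteq> None" and x = i] i by simp
  moreover have "f i \<subseteq>\<^sub>m f (max i j)" "f j \<subseteq>\<^sub>m f (max i j)"
    using assembly_seq_map_le[OF assms] by auto
  moreover have "x \<in> dom (f i)" "x \<in> dom (f j)"
    using i \<open>f j x \<noteq> None\<close> by (simp_all add: domIff)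
  ultimately have "f j x = Some v"
    using i unfolding map_le_def by (metis (no_types))
  moreover have "\<exists>i. f i x \<noteq> None"
    using i by (intro exI[of _ i]) simp
  ultimately show "lim_seq f x = Some v"
    unfolding lim_seq_def j_def by simp
qed

lemma assembly_seq_map_le_lim:
  assumes "assembly_seq S f"
  shows "f i \<subseteq>\<^sub>m lim_seq f"
  unfolding map_le_def
proof
  fix x
  assume "x \<in> dom (f i)"
  then obtain v where v: "f i x = Some v" by blast
  then have "lim_seq f x = Some v"
    using lim_seq_eq_Some_iff[OF assms] by blast
  then show "f i x = lim_seq f x"
    using v by simp
qed

lemma dom_lim_seq: "assembly_seq S f \<Longrightarrow> dom (lim_seq f) = (\<Union>i. dom (f i))"
  using lim_seq_eq_Some_iff by (fastforce simp: dom_def)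

lemma lim_seq_stationary:
  assumes "assembly_seq S f" "\<forall>j\<ge>i. f j = f i"
  shows "lim_seq f = f i"
proof
  fix x
  show "lim_seq f x = f i x"
  proof (cases "f i x")
    case None
    have "f j x = None" for j
    proof (cases "j \<le> i")
      case True
      then have "dom (f j) \<subseteq> dom (f i)"
        using assembly_seq_map_le[OF assms(1)] map_le_implies_dom_le by blast
      then show ?thesis
        using None by blast
    next
      case False
      then have "f j = f i"
        using assms(2) by (meson nat_le_linear)
      then show ?thesis
        using None by simp
    qed
    then show ?thesis
      using None unfolding lim_seq_def by simp
  next
    case (Some v)
    then have "lim_seq f x = Some v"
      using lim_seq_eq_Some_iff[OF assms(1)] by blast
    then show ?thesis
      using Some by simp
  qed
qed

lemma rtranclp_step_imp_assembly_seq: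
  assumes "(step S)\<^sup>*\<^sup>* \<alpha> \<beta>"
  shows "\<exists>f i. f 0 = \<alpha> \<and> assembly_seq S f \<and> (\<forall>j\<ge>i. f j = \<beta>)"
  using assms
proof (induction rule: rtranclp_induct)
  case base
  have "assembly_seq S (\<lambda>_. \<alpha>)"
    unfolding assembly_seq_def by simp
  then show ?case
    by (intro exI[of _ "\<lambda>_. \<alpha>"] exI[of _ 0]) simp
next
  case (step \<beta> \<gamma>)
  then obtain f i where f: "f 0 = \<alpha>" "assembly_seq S f" "\<forall>j\<ge>i. f j = \<beta>" by blast
  define g where "g j = (if j \<le> i then f j else \<gamma>)" for j
  have "g (Suc j) = g j \<or> step S (g j) (g (Suc j))" for j
  proof (cases "Suc j \<le> i")
    case True
    then show ?thesis
      using f(2) unfolding assembly_seq_def g_def by simp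
  next
    case False
    then have "j = i \<or> i < j" by auto
    then show ?thesis
      using f(3) step(2) unfolding g_def by auto
  qed
  then have "assembly_seq S g"
    unfolding assembly_seq_def by blast
  moreover have "g 0 = \<alpha>" "\<forall>j\<ge>Suc i. g j = \<gamma>"
    using f(1) unfolding g_def by simp_all
  ultimately have "g 0 = \<alpha> \<and> assembly_seq S g \<and> (\<forall>j\<ge>Suc i. g j = \<gamma>)"
    by blast
  then show ?case
    by (rule exI[of _ g, OF exI[of _ "Suc i"]])
qed

lemma produces_if_rtranclp:
  assumes "(step S)\<^sup>*\<^sup>* \<alpha> \<beta>"
  shows "produces S \<alpha> \<beta>"
proof -
  obtain f i where f: "f 0 = \<alpha>" "assembly_seq S f" "\<forall>j\<ge>i. f j = \<beta>"
    using rtranclp_step_imp_assembly_seq[OF assms] by blast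
  then have "lim_seq f = \<beta>"
    using lim_seq_stationary[OF f(2), of i] by simp
  then show ?thesis
    using f unfolding produces_iff_assembly_seq by blast
qed

lemma produces_refl: "produces S \<alpha> \<alpha>"
  by (simp add: produces_if_rtranclp)

lemma produces_imp_rtranclp_stage:
  assumes "produces S \<alpha> \<beta>" "x \<in> dom \<beta>"
  shows "\<exists>\<gamma>. (step S)\<^sup>*\<^sup>* \<alpha> \<gamma> \<and> \<gamma> \<subseteq>\<^sub>m \<beta> \<and> x \<in> dom \<gamma>"
proof -
  obtain f where f: "f 0 = \<alpha>" "assembly_seq S f" "\<beta> = lim_seq f"
    using assms(1) produces_iff_assembly_seq by blast
  obtain i where "x \<in> dom (f i)"
    using assms(2) f(2,3) dom_lim_seq by blast
  moreover have "f i \<subseteq>\<^sub>m \<beta>"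
    using assembly_seq_map_le_lim[OF f(2)] f(3) by simp
  ultimately show ?thesis
    using assembly_seq_rtranclp[OF f(2) le0] f(1) by blast
qed

lemma rtranclp_if_produces:
  assumes "produces S \<alpha> \<beta>" "finite (dom \<beta>)"
  shows "(step S)\<^sup>*\<^sup>* \<alpha> \<beta>"
proof -
  obtain f where f: "f 0 = \<alpha>" "assembly_seq S f" "\<beta> = lim_seq f"
    using assms(1) produces_iff_assembly_seq by blast
  have "\<forall>x\<in>dom \<beta>. \<exists>i. x \<in> dom (f i)"
    using f(2,3) dom_lim_seq by blast
  then obtain idx where idx: "\<forall>x\<in>dom \<beta>. x \<in> dom (f (idx x))" by metis
  define N where "N = Max (insert 0 (idx ` dom \<beta>))"
  have "dom \<beta> \<subseteq> dom (f N)"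
  proof
    fix x assume "x \<in> dom \<beta>"
    then have "idx x \<le> N"
      unfolding N_def using assms(2) by simp
    then show "x \<in> dom (f N)"
      using idx \<open>x \<in> dom \<beta>\<close> assembly_seq_map_le[OF f(2)] map_le_implies_dom_le by blast
  qed
  moreover have "f N \<subseteq>\<^sub>m \<beta>"
    using assembly_seq_map_le_lim[OF f(2)] f(3) by simp
  moreover have "\<beta> \<subseteq>\<^sub>m f N"
    unfolding map_le_def
  proof
    fix x
    assume "x \<in> dom \<beta>"
    then have "x \<in> dom (f N)"
      using \<open>dom \<beta> \<subseteq> dom (f N)\<close> by blast
    then show "\<beta> x = f N x"
      using \<open>f N \<subseteq>\<^sub>m \<beta>\<close> by (simp add: map_le_def)
  qed
  ultimately have "f N = \<beta>"
    using map_le_antisym by blast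
  then show ?thesis
    using assembly_seq_rtranclp[OF f(2) le0, of N] f(1) by simp
qed

section \<open>Pumping\<close>

definition well_formed :: "tile set \<Rightarrow> nat \<Rightarrow> assembly \<Rightarrow> bool" where
  "well_formed T \<tau> \<alpha> \<longleftrightarrow> is_assembly \<alpha> \<and> stable \<tau> \<alpha> \<and> ran \<alpha> \<subseteq> T"

lemma well_formed_seed: "valid_sys (T, \<sigma>, \<tau>) \<Longrightarrow> well_formed T \<tau> \<sigma>"
  unfolding valid_sys_def well_formed_def by simp

lemma step_well_formed: "step (T, \<sigma>, \<tau>) \<alpha> \<beta> \<Longrightarrow> well_formed T \<tau> \<alpha> \<Longrightarrow> well_formed T \<tau> \<beta>"
  unfolding step_def well_formed_def by (auto simp: ran_map_upd)

lemma rtranclp_step_well_formed: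
  "(step (T, \<sigma>, \<tau>))\<^sup>*\<^sup>* \<alpha> \<beta> \<Longrightarrow> well_formed T \<tau> \<alpha> \<Longrightarrow> well_formed T \<tau> \<beta>"
  by (induction rule: rtranclp_induct) (auto intro: step_well_formed)

lemma is_assembly_interval: "is_assembly \<alpha> \<Longrightarrow> x \<in> dom \<alpha> \<Longrightarrow> z \<in> dom \<alpha> \<Longrightarrow> {x..z} \<subseteq> dom \<alpha>"
  unfolding is_assembly_def subset_iff atLeastAtMost_iff by blast

lemma is_assembly_upd_adjacent:
  assumes "is_assembly (\<alpha>(p \<mapsto> t))" "dom \<alpha> = {a..b}" "a \<le> b" "p \<notin> dom \<alpha>"
  shows "p = a - 1 \<or> p = b + 1"
proof (rule ccontr)
  assume "\<not> (p = a - 1 \<or> p = b + 1)"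
  then consider "p < a - 1" | "b + 1 < p"
    using assms(2,4) by fastforce
  then show False
  proof cases
    case 1
    then have "{p..a} \<subseteq> dom (\<alpha>(p \<mapsto> t))"
      using is_assembly_interval[OF assms(1)] assms(2,3) by simp
    moreover have "a - 1 \<in> {p..a}" "a - 1 \<noteq> p"
      using 1 by simp_all
    ultimately have "a - 1 \<in> dom (\<alpha>(p \<mapsto> t))"
      by blast
    with \<open>a - 1 \<noteq> p\<close> have "a - 1 \<in> dom \<alpha>"
      by simp
    then show False
      using assms(2) by simp
  next
    case 2
    then have "{b..p} \<subseteq> dom (\<alpha>(p \<mapsto> t))"
      using is_assembly_interval[OF assms(1)] assms(2,3) by simp
    moreover have "b + 1 \<in> {b..p}" "b + 1 \<noteq> p"
      using 2 by simp_all
    ultimately have "b + 1 \<in> dom (\<alpha>(p \<mapsto> t))"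
      by blast
    with \<open>b + 1 \<noteq> p\<close> have "b + 1 \<in> dom \<alpha>"
      by simp
    then show False
      using assms(2) by simp
  qed
qed

definition pump :: "assembly \<Rightarrow> int \<Rightarrow> int \<Rightarrow> nat \<Rightarrow> assembly" where
  "pump \<alpha> p q k y =
     (if y < p then \<alpha> y else if y \<le> q + int k then \<alpha> (p + (y - p) mod (q - p)) else None)"

context
  fixes \<alpha> :: assembly and p q :: int
  assumes assembly: "is_assembly \<alpha>" and p_less_q: "p < q" and repeat: "\<alpha> p = \<alpha> q"
    and q_in_dom: "q \<in> dom \<alpha>" and right_empty: "\<forall>y>q. \<alpha> y = None"
begin

lemma pump_period_in_dom: "p + (y - p) mod (q - p) \<in> dom \<alpha>"
proof -
  have "p \<in> dom \<alpha>"
    using repeat q_in_dom by (simp add: domIff)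
  then have "{p..q} \<subseteq> dom \<alpha>"
    using is_assembly_interval[OF assembly _ q_in_dom] by blast
  moreover have "0 \<le> (y - p) mod (q - p)" "(y - p) mod (q - p) < q - p"
    using p_less_q by simp_all
  then have "p + (y - p) mod (q - p) \<in> {p..q}"
    by simp
  ultimately show ?thesis by blast
qed

lemma pump_period_shift: "\<alpha> (p + (y + 1 - p) mod (q - p)) = \<alpha> (p + (y - p) mod (q - p) + 1)"
proof -
  define d where "d = q - p"
  define r where "r = (y - p) mod d"
  have r: "0 \<le> r" "r < d"
    unfolding r_def d_def using p_less_q by simp_all
  have shift: "(y + 1 - p) mod d = (r + 1) mod d"
    unfolding r_def by (metis add.commute add_diff_eq mod_add_right_eq)
  show ?thesis
    unfolding d_def[symmetric] r_def[symmetric]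
  proof (cases "r + 1 < d")
    case True
    then have "(y + 1 - p) mod d = r + 1"
      using shift r by (simp add: mod_pos_pos_trivial)
    then show "\<alpha> (p + (y + 1 - p) mod d) = \<alpha> (p + r + 1)"
      by (simp add: add.assoc)
  next
    case False
    then have "r + 1 = d"
      using r by simp
    then have "(y + 1 - p) mod d = 0" "p + r + 1 = q"
      using shift d_def by simp_all
    then show "\<alpha> (p + (y + 1 - p) mod d) = \<alpha> (p + r + 1)"
      using repeat by simp
  qed
qed

lemma pump_eq_period: "p \<le> y \<Longrightarrow> y \<le> q + int k \<Longrightarrow> pump \<alpha> p q k y = \<alpha> (p + (y - p) mod (q - p))"
  unfolding pump_def by simp

lemma pump_0: "pump \<alpha> p q 0 = \<alpha>"
proof
  fix y
  show "pump \<alpha> p q 0 y = \<alpha> y"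
  proof (cases "p \<le> y \<and> y < q")
    case True
    then have "(y - p) mod (q - p) = y - p" by simp
    then show ?thesis
      using True unfolding pump_def by simp
  next
    case False
    then show ?thesis
      using repeat right_empty unfolding pump_def by auto
  qed
qed

lemma pump_right_in_dom: "p \<le> y \<Longrightarrow> y \<le> q + int k \<Longrightarrow> y \<in> dom (pump \<alpha> p q k)"
  using pump_eq_period pump_period_in_dom by (simp add: domIff)

lemma pump_right_empty: "q + int k < y \<Longrightarrow> pump \<alpha> p q k y = None"
  unfolding pump_def using p_less_q by auto

lemma is_assembly_pump: "is_assembly (pump \<alpha> p q k)"
  unfolding is_assembly_def
proof (intro conjI allI impI)
  have "q \<in> dom (pump \<alpha> p q k)"
    using pump_right_in_dom p_less_q by simp
  then show "dom (pump \<alpha> p q k) \<noteq> {}"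
    by blast
next
  fix x y z
  assume x: "x \<in> dom (pump \<alpha> p q k)" and z: "z \<in> dom (pump \<alpha> p q k)" and "x \<le> y" "y \<le> z"
  show "y \<in> dom (pump \<alpha> p q k)"
  proof (cases "y < p")
    case True
    then have "x \<in> dom \<alpha>"
      using x \<open>x \<le> y\<close> unfolding pump_def by (auto simp: domIff)
    moreover have "y \<in> {x..q}"
      using \<open>x \<le> y\<close> True p_less_q by simp
    ultimately have "y \<in> dom \<alpha>"
      using is_assembly_interval[OF assembly _ q_in_dom] by blast
    then show ?thesis
      using True unfolding pump_def by (simp add: domIff)
  next
    case False
    moreover have "z \<le> q + int k"
      using z pump_right_empty by (meson domIff not_le)
    ultimately show ?thesis
      using pump_right_in_dom \<open>y \<le> z\<close> by simp
  qed
qed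

lemma stable_pump:
  assumes "stable \<tau> \<alpha>"
  shows "stable \<tau> (pump \<alpha> p q k)"
  unfolding stable_def
proof (intro allI impI)
  fix x l r
  assume l: "pump \<alpha> p q k x = Some l" and r: "pump \<alpha> p q k (x + 1) = Some r"
  have x: "x + 1 \<le> q + int k"
  proof (rule ccontr)
    assume "\<not> x + 1 \<le> q + int k"
    then have "pump \<alpha> p q k (x + 1) = None"
      using pump_right_empty by simp
    with r show False by simp
  qed
  consider "x + 1 < p" | "x + 1 = p" | "p \<le> x" by linarith
  then show "\<tau> \<le> bond l r"
  proof cases
    case 1
    then show ?thesis
      using assms l r unfolding stable_def pump_def by auto
  next
    case 2
    then have "\<alpha> x = Some l" "\<alpha> (x + 1) = Some r"
      using l r x unfolding pump_def by auto
    then show ?thesis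
      using assms unfolding stable_def by blast
  next
    case 3
    then have "\<alpha> (p + (x - p) mod (q - p)) = Some l"
      "\<alpha> (p + (x - p) mod (q - p) + 1) = Some r"
      using l r x pump_eq_period pump_period_shift by auto
    then show ?thesis
      using assms unfolding stable_def by blast
  qed
qed

lemma step_pump:
  assumes "stable \<tau> \<alpha>" "ran \<alpha> \<subseteq> T"
  shows "step (T, \<sigma>, \<tau>) (pump \<alpha> p q k) (pump \<alpha> p q (Suc k))"
proof -
  define y where "y = q + int k + 1"
  obtain t where t: "\<alpha> (p + (y - p) mod (q - p)) = Some t"
    using pump_period_in_dom[of y] by auto
  have below: "b < y" if "b \<in> dom (pump \<alpha> p q k)" for b
  proof (rule ccontr)
    assume "\<not> b < y"
    then have "pump \<alpha> p q k b = None"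
      using pump_right_empty unfolding y_def by simp
    with that show False
      by (simp add: domIff)
  qed
  have "y \<notin> bbox (pump \<alpha> p q k)"
  proof
    assume "y \<in> bbox (pump \<alpha> p q k)"
    then obtain b where "b \<in> dom (pump \<alpha> p q k)" "y \<le> b"
      unfolding bbox_def by blast
    then show False
      using below by fastforce
  qed
  then have "linear_ok (pump \<alpha> p q k) y"
    unfolding linear_ok_def using pump_right_empty y_def by (intro exI[of _ y]) auto
  moreover have "t \<in> T"
    using t assms(2) by (auto simp: ran_def)
  moreover have "pump \<alpha> p q k y = None"
    using pump_right_empty y_def by simp
  moreover have "pump \<alpha> p q (Suc k) = (pump \<alpha> p q k)(y \<mapsto> t)"
    using t p_less_q unfolding pump_def y_def by (auto simp: fun_eq_iff)
  moreover have "is_assembly (pump \<alpha> p q (Suc k))" "stable \<tau> (pump \<alpha> p q (Suc k))"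
    using is_assembly_pump stable_pump[OF assms(1)] by blast+
  ultimately show ?thesis
    unfolding step_def prod.case by blast
qed

lemma rtranclp_pump:
  assumes "well_formed T \<tau> \<alpha>"
  shows "(step (T, \<sigma>, \<tau>))\<^sup>*\<^sup>* \<alpha> (pump \<alpha> p q k)"
proof (induction k)
  case 0
  then show ?case by (simp add: pump_0)
next
  case (Suc k)
  then show ?case
    using step_pump assms unfolding well_formed_def by (meson rtranclp.rtrancl_into_rtrancl)
qed

end

lemma first_placement:
  assumes "(step S)\<^sup>*\<^sup>* \<alpha> \<beta>" "is_assembly \<alpha>" "y0 \<in> dom \<alpha>" "y0 < q" "q \<notin> dom \<alpha>" "q \<in> dom \<beta>"
  shows "\<exists>\<gamma>. (step S)\<^sup>*\<^sup>* \<alpha> \<gamma> \<and> (step S)\<^sup>*\<^sup>* \<gamma> \<beta> \<and> q \<in> dom \<gamma> \<and> (\<forall>y>q. \<gamma> y = None)"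
  using assms(1,6)
proof (induction rule: rtranclp_induct)
  case base
  then show ?case
    using assms(5) by simp
next
  case (step \<beta> \<gamma>)
  show ?case
  proof (cases "q \<in> dom \<beta>")
    case True
    then show ?thesis
      using step.IH step.hyps(2) by (meson rtranclp.rtrancl_into_rtrancl)
  next
    case False
    obtain x t where upd: "\<beta> x = None" "\<gamma> = \<beta>(x \<mapsto> t)"
      using step_imp_upd[OF step.hyps(2)] by blast
    then have "x = q"
      using False step.prems by (auto simp: domIff split: if_splits)
    have "\<beta> y = None" if "q < y" for y
    proof (rule ccontr)
      assume "\<beta> y \<noteq> None"
      moreover have "y0 \<in> dom \<beta>"
        using rtranclp_step_map_le[OF step.hyps(1)] assms(3) map_le_implies_dom_le by blast
      moreover have "is_assembly \<beta>"
        using rtranclp_step_is_assembly[OF step.hyps(1) assms(2)] .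
      ultimately have "{y0..y} \<subseteq> dom \<beta>"
        using is_assembly_interval[of \<beta> y0 y] by (simp add: domIff)
      moreover have "q \<in> {y0..y}"
        using assms(4) that by simp
      ultimately have "q \<in> dom \<beta>"
        by blast
      with False show False ..
    qed
    then have "\<forall>y>q. \<gamma> y = None"
      using upd \<open>x = q\<close> by simp
    moreover have "(step S)\<^sup>*\<^sup>* \<alpha> \<gamma>"
      using step.hyps by (meson rtranclp.rtrancl_into_rtrancl)
    ultimately have "(step S)\<^sup>*\<^sup>* \<alpha> \<gamma> \<and> (step S)\<^sup>*\<^sup>* \<gamma> \<gamma> \<and> q \<in> dom \<gamma> \<and> (\<forall>y>q. \<gamma> y = None)"
      using step.prems by simp
    then show ?thesis
      by (rule exI[of _ \<gamma>])
  qed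
qed

lemma repeated_tile:
  assumes "finite T" "ran \<alpha> \<subseteq> T" "{a..a + int (card T)} \<subseteq> dom \<alpha>"
  shows "\<exists>p q. a \<le> p \<and> p < q \<and> q \<le> a + int (card T) \<and> \<alpha> p = \<alpha> q"
proof -
  let ?I = "{a..a + int (card T)}"
  have "\<alpha> ` ?I \<subseteq> Some ` T"
    using assms(2,3) by (force simp: ran_def)
  then have "card (\<alpha> ` ?I) \<le> card T"
    using assms(1) by (metis card_image card_mono finite_imageI inj_Some)
  then have "\<not> inj_on \<alpha> ?I"
    using pigeonhole[of \<alpha> ?I] by simp
  then obtain x y where xy: "x \<in> ?I" "y \<in> ?I" "x \<noteq> y" "\<alpha> x = \<alpha> y"
    unfolding inj_on_def by blast
  consider "x < y" | "y < x"
    using xy(3) by linarith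
  then show ?thesis
  proof cases
    case 1
    then have "a \<le> x \<and> x < y \<and> y \<le> a + int (card T) \<and> \<alpha> x = \<alpha> y"
      using xy by simp
    then show ?thesis by blast
  next
    case 2
    then have "a \<le> y \<and> y < x \<and> x \<le> a + int (card T) \<and> \<alpha> y = \<alpha> x"
      using xy by simp
    then show ?thesis by blast
  qed
qed

lemma pumping:
  assumes wf: "well_formed T \<tau> \<alpha>" and "p < q" "\<alpha> p = \<alpha> q" "q \<in> dom \<alpha>" "\<forall>y>q. \<alpha> y = None"
    and "y0 \<in> dom \<alpha>"
  shows "\<exists>\<delta>. (step (T, \<sigma>, \<tau>))\<^sup>*\<^sup>* \<alpha> \<delta> \<and> {y0..N} \<subseteq> dom \<delta>"
proof -
  define \<delta> where "\<delta> = pump \<alpha> p q (nat (N - q))"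
  have asm: "is_assembly \<alpha>"
    using wf unfolding well_formed_def by blast
  have reach: "(step (T, \<sigma>, \<tau>))\<^sup>*\<^sup>* \<alpha> \<delta>"
    unfolding \<delta>_def by (rule rtranclp_pump[OF asm assms(2-5) wf])
  have "{y0..q + int (nat (N - q))} \<subseteq> dom \<delta>"
  proof (rule is_assembly_interval)
    show "is_assembly \<delta>"
      unfolding \<delta>_def by (rule is_assembly_pump[OF asm assms(2-5)])
    show "y0 \<in> dom \<delta>"
      using rtranclp_step_map_le[OF reach] assms(6) map_le_implies_dom_le by blast
    show "q + int (nat (N - q)) \<in> dom \<delta>"
      unfolding \<delta>_def using pump_right_in_dom[OF asm assms(2-5)] assms(2) by simp
  qed
  moreover have "{y0..N} \<subseteq> {y0..q + int (nat (N - q))}"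
    by auto
  ultimately have "(step (T, \<sigma>, \<tau>))\<^sup>*\<^sup>* \<alpha> \<delta> \<and> {y0..N} \<subseteq> dom \<delta>"
    using reach by blast
  then show ?thesis
    by (rule exI[of _ \<delta>])
qed

lemma unbounded_growth:
  assumes "finite T" and reach: "(step (T, \<sigma>, \<tau>))\<^sup>*\<^sup>* \<alpha> \<beta>" and wf: "well_formed T \<tau> \<alpha>"
    and y0: "y0 \<in> dom \<alpha>" "y0 < a" and fresh: "\<forall>y\<ge>a. \<alpha> y = None"
    and long: "{a..a + int (card T)} \<subseteq> dom \<beta>"
  shows "\<exists>\<delta>. (step (T, \<sigma>, \<tau>))\<^sup>*\<^sup>* \<alpha> \<delta> \<and> {a..N} \<subseteq> dom \<delta>"
proof -
  obtain p q where pq: "a \<le> p" "p < q" "q \<le> a + int (card T)" "\<beta> p = \<beta> q"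
    using repeated_tile[OF assms(1) _ long] rtranclp_step_well_formed[OF reach wf]
    unfolding well_formed_def by blast
  have "q \<in> {a..a + int (card T)}"
    using pq by simp
  then have q_in: "q \<in> dom \<beta>"
    using long by blast
  have q_notin: "q \<notin> dom \<alpha>"
    using fresh pq(1,2) by (simp add: domIff)
  have "is_assembly \<alpha>" "y0 < q"
    using wf y0(2) pq unfolding well_formed_def by simp_all
  then obtain \<gamma> where \<gamma>: "(step (T, \<sigma>, \<tau>))\<^sup>*\<^sup>* \<alpha> \<gamma>" "(step (T, \<sigma>, \<tau>))\<^sup>*\<^sup>* \<gamma> \<beta>"
      "q \<in> dom \<gamma>" "\<forall>y>q. \<gamma> y = None"
    using first_placement[OF reach _ y0(1) _ q_notin q_in] by blast
  have wf\<gamma>: "well_formed T \<tau> \<gamma>"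
    using rtranclp_step_well_formed[OF \<gamma>(1) wf] .
  have y0\<gamma>: "y0 \<in> dom \<gamma>"
    using rtranclp_step_map_le[OF \<gamma>(1)] y0(1) map_le_implies_dom_le by blast
  then have "{y0..q} \<subseteq> dom \<gamma>"
    using is_assembly_interval[OF _ y0\<gamma> \<gamma>(3)] wf\<gamma> unfolding well_formed_def by blast
  moreover have "p \<in> {y0..q}"
    using y0(2) pq(1,2) by simp
  ultimately have "p \<in> dom \<gamma>"
    by blast
  then have "\<gamma> p = \<gamma> q"
    using rtranclp_step_map_le[OF \<gamma>(2)] \<gamma>(3) pq(4) unfolding map_le_def by simp
  then obtain \<delta> where \<delta>: "(step (T, \<sigma>, \<tau>))\<^sup>*\<^sup>* \<gamma> \<delta>" "{y0..N} \<subseteq> dom \<delta>"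
    using pumping[OF wf\<gamma> pq(2) _ \<gamma>(3,4) y0\<gamma>] by blast
  moreover have "{a..N} \<subseteq> {y0..N}"
    using y0(2) by auto
  ultimately have "(step (T, \<sigma>, \<tau>))\<^sup>*\<^sup>* \<alpha> \<delta> \<and> {a..N} \<subseteq> dom \<delta>"
    using rtranclp_trans[OF \<gamma>(1) \<delta>(1)] by blast
  then show ?thesis
    by (rule exI[of _ \<delta>])
qed

section \<open>A directed line of L tiles\<close>

(* Tile k has west glue a^k and east glue a^(k+1); only a^1, ..., a^(L-1) have strength 1, so
   at temperature 1 the seed tile 0 grows exactly into the line of tiles 0, ..., L - 1. *)
definition line_glue :: "nat \<Rightarrow> nat \<Rightarrow> glue" where
  "line_glue L k = (replicate k CHR ''a'', if 0 < k \<and> k < L then 1 else 0)"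

definition line_tile :: "nat \<Rightarrow> nat \<Rightarrow> tile" where
  "line_tile L k = (line_glue L k, line_glue L (Suc k))"

definition line_asm :: "nat \<Rightarrow> nat \<Rightarrow> assembly" where
  "line_asm L k y = (if 0 \<le> y \<and> y \<le> int k then Some (line_tile L (nat y)) else None)"

definition line_sys :: "nat \<Rightarrow> tsys" where
  "line_sys L = (line_tile L ` {..<L}, line_asm L 0, 1)"

lemma bond_line_tile: "1 \<le> bond (line_tile L j) (line_tile L k) \<longleftrightarrow> k = Suc j \<and> Suc j < L"
proof -
  have "line_glue L (Suc j) = line_glue L k \<longleftrightarrow> k = Suc j"
  proof
    assume "line_glue L (Suc j) = line_glue L k"
    then have "length (fst (line_glue L (Suc j))) = length (fst (line_glue L k))"
      by simp
    then show "k = Suc j"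
      by (simp add: line_glue_def)
  qed simp
  then show ?thesis
    unfolding bond_def line_tile_def east_def west_def by (auto simp: line_glue_def)
qed

lemma bond_line_tile_0: "bond t (line_tile L 0) = 0"
  unfolding bond_def line_tile_def west_def line_glue_def by auto

lemma dom_line_asm: "dom (line_asm L k) = {0..int k}"
  unfolding line_asm_def dom_def by auto

lemma is_assembly_line_asm: "is_assembly (line_asm L k)"
  unfolding is_assembly_def dom_line_asm by auto

lemma stable_line_asm:
  assumes "k < L"
  shows "stable 1 (line_asm L k)"
  unfolding stable_def
proof (intro allI impI)
  fix x l r
  assume "line_asm L k x = Some l" "line_asm L k (x + 1) = Some r"
  then have x: "0 \<le> x" "x + 1 \<le> int k" and "l = line_tile L (nat x)" "r = line_tile L (nat (x + 1))"
    unfolding line_asm_def by (auto split: if_splits)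
  moreover have "nat (x + 1) = Suc (nat x)" "Suc (nat x) < L"
    using x assms by linarith+
  ultimately show "1 \<le> bond l r"
    using bond_line_tile[of L "nat x" "Suc (nat x)"] by simp
qed

lemma line_asm_upd: "(line_asm L k)(int (Suc k) \<mapsto> line_tile L (Suc k)) = line_asm L (Suc k)"
  unfolding line_asm_def by (auto simp: fun_eq_iff nat_add_distrib)

lemma step_line_asm_iff:
  assumes "k < L"
  shows "step (line_sys L) (line_asm L k) \<beta> \<longleftrightarrow> Suc k < L \<and> \<beta> = line_asm L (Suc k)"
proof
  assume "step (line_sys L) (line_asm L k) \<beta>"
  then obtain p j where "j < L" "line_asm L k p = None" and
    \<beta>: "\<beta> = (line_asm L k)(p \<mapsto> line_tile L j)" "is_assembly \<beta>" "stable 1 \<beta>"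
    unfolding step_def line_sys_def by auto
  then have "p \<notin> dom (line_asm L k)"
    by (simp add: domIff)
  then have "p = 0 - 1 \<or> p = int k + 1"
    using is_assembly_upd_adjacent[OF _ dom_line_asm] \<beta>(1,2) by simp
  then have "p = -1 \<or> p = int k + 1"
    by simp
  then show "Suc k < L \<and> \<beta> = line_asm L (Suc k)"
  proof
    assume "p = -1"
    then have "\<beta> (-1) = Some (line_tile L j)" "\<beta> (-1 + 1) = Some (line_tile L 0)"
      using \<beta>(1) unfolding line_asm_def by auto
    then show ?thesis
      using \<beta>(3) bond_line_tile_0 unfolding stable_def by (metis not_one_le_zero)
  next
    assume "p = int k + 1"
    then have "\<beta> (int k) = Some (line_tile L k)" "\<beta> (int k + 1) = Some (line_tile L j)"
      using \<beta>(1) unfolding line_asm_def by auto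
    then have "j = Suc k \<and> Suc k < L"
      using \<beta>(3) bond_line_tile unfolding stable_def by blast
    then show ?thesis
      using \<beta>(1) \<open>p = int k + 1\<close> line_asm_upd by (metis of_nat_Suc add.commute)
  qed
next
  assume \<beta>: "Suc k < L \<and> \<beta> = line_asm L (Suc k)"
  have "line_tile L (Suc k) \<in> line_tile L ` {..<L}"
    using \<beta> by simp
  moreover have "line_asm L k (int (Suc k)) = None"
    by (simp add: line_asm_def)
  moreover have "linear_ok (line_asm L k) (int (Suc k))"
    unfolding linear_ok_def bbox_def dom_line_asm by (intro exI[of _ "int (Suc k)"]) auto
  moreover have "\<beta> = (line_asm L k)(int (Suc k) \<mapsto> line_tile L (Suc k))"
    using \<beta> line_asm_upd by simp
  moreover have "is_assembly \<beta>" "stable 1 \<beta>"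
    using \<beta> is_assembly_line_asm stable_line_asm by simp_all
  ultimately show "step (line_sys L) (line_asm L k) \<beta>"
    unfolding step_def line_sys_def prod.case by blast
qed

lemma rtranclp_line_sys_iff:
  assumes "0 < L"
  shows "(step (line_sys L))\<^sup>*\<^sup>* (line_asm L 0) \<beta> \<longleftrightarrow> (\<exists>k<L. \<beta> = line_asm L k)"
proof
  assume "(step (line_sys L))\<^sup>*\<^sup>* (line_asm L 0) \<beta>"
  then show "\<exists>k<L. \<beta> = line_asm L k"
    by (induction rule: rtranclp_induct) (use assms step_line_asm_iff in blast)+
next
  have "(step (line_sys L))\<^sup>*\<^sup>* (line_asm L 0) (line_asm L k)" if "k < L" for k
    using that
  proof (induction k)
    case (Suc k)
    then have "(step (line_sys L))\<^sup>*\<^sup>* (line_asm L 0) (line_asm L k)"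
      by simp
    moreover have "step (line_sys L) (line_asm L k) (line_asm L (Suc k))"
      using step_line_asm_iff[of k L] Suc.prems by simp
    ultimately show ?case
      by (meson rtranclp.rtrancl_into_rtrancl)
  qed simp
  then show "\<exists>k<L. \<beta> = line_asm L k \<Longrightarrow> (step (line_sys L))\<^sup>*\<^sup>* (line_asm L 0) \<beta>"
    by blast
qed

lemma producible_line_sys_iff:
  assumes "0 < L"
  shows "producible (line_sys L) \<beta> \<longleftrightarrow> (\<exists>k<L. \<beta> = line_asm L k)"
proof
  assume "producible (line_sys L) \<beta>"
  then have prod: "produces (line_sys L) (line_asm L 0) \<beta>"
    unfolding producible_def line_sys_def by simp
  have "dom \<beta> \<subseteq> {0..int L}"
  proof
    fix x
    assume "x \<in> dom \<beta>"
    then obtain \<gamma> where "(step (line_sys L))\<^sup>*\<^sup>* (line_asm L 0) \<gamma>" "x \<in> dom \<gamma>"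
      using produces_imp_rtranclp_stage[OF prod] by blast
    moreover obtain k where "k < L" "\<gamma> = line_asm L k"
      using rtranclp_line_sys_iff[OF assms] calculation(1) by blast
    ultimately show "x \<in> {0..int L}"
      by (simp add: dom_line_asm)
  qed
  then have "(step (line_sys L))\<^sup>*\<^sup>* (line_asm L 0) \<beta>"
    using rtranclp_if_produces[OF prod] finite_subset by blast
  then show "\<exists>k<L. \<beta> = line_asm L k"
    using rtranclp_line_sys_iff[OF assms] by blast
next
  assume "\<exists>k<L. \<beta> = line_asm L k"
  then show "producible (line_sys L) \<beta>"
    using rtranclp_line_sys_iff[OF assms] produces_if_rtranclp
    unfolding producible_def line_sys_def by auto
qed

lemma terminal_line_sys_iff:
  assumes "0 < L"
  shows "terminal (line_sys L) \<beta> \<longleftrightarrow> \<beta> = line_asm L (L - 1)"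
proof
  assume "terminal (line_sys L) \<beta>"
  then obtain k where k: "k < L" "\<beta> = line_asm L k" and "\<not> (\<exists>\<gamma>. step (line_sys L) \<beta> \<gamma>)"
    unfolding terminal_def producible_line_sys_iff[OF assms] by blast
  then have "\<not> Suc k < L"
    using step_line_asm_iff by blast
  then have "k = L - 1"
    using k(1) by simp
  then show "\<beta> = line_asm L (L - 1)"
    using k(2) by simp
next
  assume \<beta>: "\<beta> = line_asm L (L - 1)"
  have "\<not> step (line_sys L) \<beta> \<gamma>" for \<gamma>
    using step_line_asm_iff[of "L - 1" L \<gamma>] assms \<beta> by simp
  moreover have "L - 1 < L"
    using assms by simp
  ultimately show "terminal (line_sys L) \<beta>"
    unfolding terminal_def producible_line_sys_iff[OF assms] using \<beta> by blast
qed

lemma directed_line_sys: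
  assumes "0 < L"
  shows "directed (line_sys L)"
proof -
  have "ran (line_asm L 0) \<subseteq> line_tile L ` {..<L}"
    using assms by (auto simp: ran_def line_asm_def)
  then have "valid_sys (line_sys L)"
    unfolding valid_sys_def line_sys_def
    using is_assembly_line_asm stable_line_asm[OF assms] by (simp add: dom_line_asm)
  moreover have "{\<beta>. terminal (line_sys L) \<beta>} = {line_asm L (L - 1)}"
    using terminal_line_sys_iff[OF assms] by blast
  ultimately show ?thesis
    unfolding directed_def by simp
qed

section \<open>Blocks and simulation\<close>

lemma mblock_replicate_None:
  assumes "\<not> nonempty_block m \<alpha> x"
  shows "mblock m \<alpha> x = replicate m None"
proof (rule nth_equalityI)
  show "length (mblock m \<alpha> x) = length (replicate m (None :: tile option))"
    unfolding mblock_def by simp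
next
  fix i
  assume "i < length (mblock m \<alpha> x)"
  then show "mblock m \<alpha> x ! i = replicate m None ! i"
    using assms unfolding mblock_def nonempty_block_def by simp
qed

lemma mblock_blocks_over: "ran \<alpha> \<subseteq> U \<Longrightarrow> mblock m \<alpha> x \<in> blocks_over m U"
  unfolding blocks_over_def mblock_def by (auto simp: ran_def)

lemma empty_block_unrepresented:
  assumes "valid_rep U m R" "ran \<alpha> \<subseteq> U" "x \<notin> dom (Rstar m R \<alpha>)"
  shows "R (replicate m None) = None"
proof (rule ccontr)
  assume empty: "R (replicate m None) \<noteq> None"
  have "block_le (replicate m None) (mblock m \<alpha> x)"
    unfolding block_le_def mblock_def by simp
  then have "R (mblock m \<alpha> x) = R (replicate m None)"
    using assms(1) mblock_blocks_over[OF assms(2)] empty unfolding valid_rep_def by blast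
  then show False
    using assms(3) empty unfolding Rstar_def by (simp add: domIff)
qed

lemma nonempty_block_if_represented:
  assumes "R (replicate m None) = None" "x \<in> dom (Rstar m R \<alpha>)"
  shows "nonempty_block m \<alpha> x"
proof (rule ccontr)
  assume "\<not> nonempty_block m \<alpha> x"
  then have "Rstar m R \<alpha> x = None"
    using assms(1) mblock_replicate_None unfolding Rstar_def by simp
  with assms(2) show False
    by (simp add: domIff)
qed

lemma nonempty_block_div:
  assumes "0 < m" "y \<in> dom \<alpha>"
  shows "nonempty_block m \<alpha> (y div int m)"
proof -
  have "0 \<le> y mod int m" "y mod int m < int m"
    using assms(1) by simp_all
  then have "int m * (y div int m) + int (nat (y mod int m)) = y" "nat (y mod int m) < m"
    by (simp_all add: nat_less_iff)
  then show ?thesis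
    unfolding nonempty_block_def using assms(2) by (metis domIff)
qed

lemma nonempty_block_map_le: "\<alpha> \<subseteq>\<^sub>m \<beta> \<Longrightarrow> nonempty_block m \<alpha> x \<Longrightarrow> nonempty_block m \<beta> x"
  unfolding nonempty_block_def using map_le_implies_dom_le by (fastforce simp: domIff)

lemma maps_cleanly_block_bounds:
  assumes "maps_cleanly m R \<alpha>" "nonempty_block m \<alpha> x" "nonempty_block m \<alpha> y" "x \<noteq> y"
    and "dom (Rstar m R \<alpha>) \<subseteq> {a..b}"
  shows "a - 1 \<le> x \<and> x \<le> b + 1"
proof -
  obtain z where "z \<in> {x - 1, x, x + 1}" "z \<in> dom (Rstar m R \<alpha>)"
    using assms(1-4) unfolding maps_cleanly_def by blast
  then show ?thesis
    using assms(5) by auto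
qed

lemma dom_subset_if_blocks_bounded:
  assumes "0 < m" "\<And>x. nonempty_block m \<alpha> x \<Longrightarrow> a \<le> x \<and> x \<le> b"
  shows "dom \<alpha> \<subseteq> {int m * a ..< int m * (b + 1)}"
proof
  fix y
  assume "y \<in> dom \<alpha>"
  then have "a \<le> y div int m" "y div int m \<le> b"
    using assms nonempty_block_div by blast+
  then have "int m * a \<le> int m * (y div int m)" "int m * (y div int m + 1) \<le> int m * (b + 1)"
    by (simp_all add: mult_left_mono)
  moreover have "int m * (y div int m) \<le> y" "y < int m * (y div int m + 1)"
    using assms(1) by (simp_all add: distrib_left minus_mod_eq_mult_div[symmetric])
  ultimately show "y \<in> {int m * a ..< int m * (b + 1)}"
    by simp
qed

lemma simulates_scale_pos: "simulates S T m R \<Longrightarrow> 0 < m"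
  unfolding simulates_def by (elim conjE) assumption

lemma simulates_valid_rep: "simulates S T m R \<Longrightarrow> valid_rep (fst S) m R"
  unfolding simulates_def by (elim conjE) assumption

lemma simulates_producible_image:
  "simulates S T m R \<Longrightarrow> Rstar m R ` {\<alpha>'. producible S \<alpha>'} = {\<alpha>. producible T \<alpha>}"
  unfolding simulates_def by (elim conjE) assumption

lemma simulates_maps_cleanly:
  assumes "simulates S T m R" "producible S \<alpha>'"
  shows "maps_cleanly m R \<alpha>'"
proof -
  have "\<forall>\<alpha>'. producible S \<alpha>' \<longrightarrow> maps_cleanly m R \<alpha>'"
    using assms(1) unfolding simulates_def by (elim conjE) assumption
  then show ?thesis
    using assms(2) by blast
qed

lemma simulates_lift_production:
  assumes sim: "simulates S T m R" and "producible T \<alpha>" "producible T \<beta>" "produces T \<alpha> \<beta>"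
  shows "\<exists>\<alpha>'. producible S \<alpha>' \<and> Rstar m R \<alpha>' = \<alpha> \<and>
           (\<exists>\<beta>'. produces S \<alpha>' \<beta>' \<and> Rstar m R \<beta>' = \<beta>)"
proof -
  obtain \<Pi> where \<Pi>: "\<Pi> \<subseteq> {\<alpha>'. producible S \<alpha>'}" "\<forall>\<alpha>' \<in> \<Pi>. Rstar m R \<alpha>' = \<alpha>"
    and models: "\<forall>\<beta>. producible T \<beta> \<longrightarrow> produces T \<alpha> \<beta> \<longrightarrow>
              (\<forall>\<alpha>' \<in> \<Pi>. \<exists>\<beta>'. produces S \<alpha>' \<beta>' \<and> Rstar m R \<beta>' = \<beta>) \<and>
              (\<forall>\<alpha>'' \<beta>'. producible S \<alpha>'' \<longrightarrow> produces S \<alpha>'' \<beta>' \<longrightarrow>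
                  Rstar m R \<alpha>'' = \<alpha> \<longrightarrow> Rstar m R \<beta>' = \<beta> \<longrightarrow> (\<exists>\<alpha>' \<in> \<Pi>. produces S \<alpha>' \<alpha>''))"
  proof -
    have "\<forall>\<alpha>. producible T \<alpha> \<longrightarrow>
        (\<exists>\<Pi>. \<Pi> \<subseteq> {\<alpha>'. producible S \<alpha>'} \<and> (\<forall>\<alpha>' \<in> \<Pi>. Rstar m R \<alpha>' = \<alpha>) \<and>
           (\<forall>\<beta>. producible T \<beta> \<longrightarrow> produces T \<alpha> \<beta> \<longrightarrow>
              (\<forall>\<alpha>' \<in> \<Pi>. \<exists>\<beta>'. produces S \<alpha>' \<beta>' \<and> Rstar m R \<beta>' = \<beta>) \<and>
              (\<forall>\<alpha>'' \<beta>'. producible S \<alpha>'' \<longrightarrow> produces S \<alpha>'' \<beta>' \<longrightarrow>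
                  Rstar m R \<alpha>'' = \<alpha> \<longrightarrow> Rstar m R \<beta>' = \<beta> \<longrightarrow>
                  (\<exists>\<alpha>' \<in> \<Pi>. produces S \<alpha>' \<alpha>''))))"
      using sim unfolding simulates_def by (elim conjE) assumption
    from this[rule_format, OF \<open>producible T \<alpha>\<close>] show thesis
      by (elim exE conjE) (rule that; assumption)
  qed
  have "\<alpha> \<in> Rstar m R ` {\<alpha>'. producible S \<alpha>'}"
    using simulates_producible_image[OF sim] \<open>producible T \<alpha>\<close> by blast
  then obtain \<alpha>0 where "producible S \<alpha>0" "Rstar m R \<alpha>0 = \<alpha>"
    by blast
  then obtain \<alpha>' where "\<alpha>' \<in> \<Pi>"
    using models \<open>producible T \<alpha>\<close> produces_refl by blast
  moreover obtain \<beta>' where "produces S \<alpha>' \<beta>'" "Rstar m R \<beta>' = \<beta>"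
    using models assms(3,4) \<open>\<alpha>' \<in> \<Pi>\<close> by blast
  ultimately show ?thesis
    using \<Pi> by blast
qed

section \<open>No simulator grows a long line\<close>

lemma scaled_length_bound:
  assumes "0 < m" "n + 3 \<le> L"
  shows "2 * int m + int n \<le> int m * (int L - 1)"
proof -
  have "int m * (int n + 2) \<le> int m * (int L - 1)"
    using assms(2) by (intro mult_left_mono) simp_all
  moreover have "int n * 1 \<le> int n * int m"
    using assms(1) by (intro mult_left_mono) simp_all
  ultimately show ?thesis
    by (simp add: algebra_simps)
qed

context
  fixes U :: "tile set" and \<sigma> :: assembly and \<tau> L m :: nat and R :: rep
  assumes valid: "valid_sys (U, \<sigma>, \<tau>)" and sim: "simulates (U, \<sigma>, \<tau>) (line_sys L) m R"
    and L_pos: "0 < L"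
begin

lemma line_sim_image:
  assumes "producible (U, \<sigma>, \<tau>) \<alpha>"
  shows "\<exists>k<L. Rstar m R \<alpha> = line_asm L k"
proof -
  have "Rstar m R \<alpha> \<in> {\<alpha>. producible (line_sys L) \<alpha>}"
    using simulates_producible_image[OF sim] assms by blast
  then show ?thesis
    using producible_line_sys_iff[OF L_pos] by blast
qed

lemma line_sim_empty_block: "R (replicate m None) = None"
proof -
  have "producible (U, \<sigma>, \<tau>) \<sigma>"
    unfolding producible_def using produces_refl by simp
  then obtain k where "Rstar m R \<sigma> = line_asm L k"
    using line_sim_image by blast
  then have "-1 \<notin> dom (Rstar m R \<sigma>)"
    by (simp add: dom_line_asm)
  moreover have "valid_rep U m R"
    using simulates_valid_rep[OF sim] by simp
  moreover have "ran \<sigma> \<subseteq> U"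
    using valid unfolding valid_sys_def by simp
  ultimately show ?thesis
    using empty_block_unrepresented by blast
qed

lemma line_sim_blocks_bounded:
  assumes "producible (U, \<sigma>, \<tau>) \<alpha>" "Rstar m R \<alpha> = line_asm L k"
    and "nonempty_block m \<alpha> 0" "nonempty_block m \<alpha> x"
  shows "-1 \<le> x \<and> x \<le> int k + 1"
proof (cases "x = 0")
  case False
  have "dom (Rstar m R \<alpha>) \<subseteq> {0..int k}"
    using assms(2) by (simp add: dom_line_asm)
  then show ?thesis
    using maps_cleanly_block_bounds[OF simulates_maps_cleanly[OF sim assms(1)] assms(4,3) False]
    by fastforce
qed simp

lemma line_sim_no_far_block:
  assumes "producible (U, \<sigma>, \<tau>) \<gamma>" "nonempty_block m \<gamma> 0"
  shows "\<not> nonempty_block m \<gamma> (int L + 1)"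
proof
  assume "nonempty_block m \<gamma> (int L + 1)"
  moreover obtain k where "k < L" "Rstar m R \<gamma> = line_asm L k"
    using line_sim_image[OF assms(1)] by blast
  ultimately have "int L + 1 \<le> int k + 1"
    using line_sim_blocks_bounded[OF assms(1)] assms(2) by blast
  with \<open>k < L\<close> show False
    by simp
qed

lemma line_sim_seed:
  obtains \<alpha>' \<beta>' where "(step (U, \<sigma>, \<tau>))\<^sup>*\<^sup>* \<sigma> \<alpha>'" "nonempty_block m \<alpha>' 0"
    "dom \<alpha>' \<subseteq> {- int m ..< 2 * int m}"
    "produces (U, \<sigma>, \<tau>) \<alpha>' \<beta>'" "Rstar m R \<beta>' = line_asm L (L - 1)"
proof -
  have "L - 1 < L"
    using L_pos by simp
  then have "producible (line_sys L) (line_asm L 0)" "producible (line_sys L) (line_asm L (L - 1))"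
    using producible_line_sys_iff[OF L_pos] L_pos by blast+
  moreover have "produces (line_sys L) (line_asm L 0) (line_asm L (L - 1))"
    using calculation(2) unfolding producible_def line_sys_def by simp
  ultimately obtain \<alpha>' \<beta>' where \<alpha>': "producible (U, \<sigma>, \<tau>) \<alpha>'" "Rstar m R \<alpha>' = line_asm L 0"
    and \<beta>': "produces (U, \<sigma>, \<tau>) \<alpha>' \<beta>'" "Rstar m R \<beta>' = line_asm L (L - 1)"
    using simulates_lift_production[OF sim] by blast
  have block0: "nonempty_block m \<alpha>' 0"
    using nonempty_block_if_represented[where R = R, OF line_sim_empty_block] \<alpha>'(2)
    by (simp add: dom_line_asm)
  have "dom \<alpha>' \<subseteq> {int m * (-1) ..< int m * (1 + 1)}"
  proof (rule dom_subset_if_blocks_bounded[OF simulates_scale_pos[OF sim]])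
    fix x
    assume "nonempty_block m \<alpha>' x"
    then show "-1 \<le> x \<and> x \<le> 1"
      using line_sim_blocks_bounded[OF \<alpha>' block0] by simp
  qed
  then have "dom \<alpha>' \<subseteq> {- int m ..< 2 * int m}"
    by (simp add: mult.commute)
  moreover have "finite (dom \<alpha>')"
    using calculation by (rule finite_subset) simp
  then have "(step (U, \<sigma>, \<tau>))\<^sup>*\<^sup>* \<sigma> \<alpha>'"
    using rtranclp_if_produces \<alpha>'(1) unfolding producible_def by simp
  ultimately show thesis
    using that block0 \<beta>' by blast
qed

lemma line_sim_long_stage:
  assumes "card U + 3 \<le> L" "(step (U, \<sigma>, \<tau>))\<^sup>*\<^sup>* \<sigma> \<alpha>'"
    and "produces (U, \<sigma>, \<tau>) \<alpha>' \<beta>'" "Rstar m R \<beta>' = line_asm L (L - 1)"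
    and "y0 \<in> dom \<alpha>'" "y0 < 2 * int m"
  obtains \<beta> where "(step (U, \<sigma>, \<tau>))\<^sup>*\<^sup>* \<alpha>' \<beta>" "{2 * int m .. 2 * int m + int (card U)} \<subseteq> dom \<beta>"
proof -
  have "nonempty_block m \<beta>' (int L - 1)"
    using nonempty_block_if_represented[where R = R, OF line_sim_empty_block] assms(4) L_pos
    by (simp add: dom_line_asm)
  then obtain j where "\<beta>' (int m * (int L - 1) + int j) \<noteq> None"
    unfolding nonempty_block_def by blast
  then obtain z where z: "z \<in> dom \<beta>'" "int m * (int L - 1) \<le> z"
    by (metis domIff le_add_same_cancel1 of_nat_0_le_iff)
  then obtain \<beta> where \<beta>: "(step (U, \<sigma>, \<tau>))\<^sup>*\<^sup>* \<alpha>' \<beta>" "z \<in> dom \<beta>"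
    using produces_imp_rtranclp_stage[OF assms(3)] by blast
  have "well_formed U \<tau> \<beta>"
    using rtranclp_step_well_formed[OF rtranclp_trans[OF assms(2) \<beta>(1)] well_formed_seed[OF valid]] .
  moreover have "y0 \<in> dom \<beta>"
    using rtranclp_step_map_le[OF \<beta>(1)] assms(5) map_le_implies_dom_le by blast
  ultimately have "{y0..z} \<subseteq> dom \<beta>"
    using is_assembly_interval[OF _ _ \<beta>(2)] unfolding well_formed_def by blast
  moreover have "{2 * int m .. 2 * int m + int (card U)} \<subseteq> {y0..z}"
    using assms(6) z(2) scaled_length_bound[OF simulates_scale_pos[OF sim] assms(1)] by auto
  ultimately show thesis
    using that \<beta>(1) by blast
qed

end

lemma line_sys_not_simulated:
  assumes "finite U" "valid_sys (U, \<sigma>, \<tau>)" "card U + 3 \<le> L"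
  shows "\<not> simulates (U, \<sigma>, \<tau>) (line_sys L) m R"
proof
  assume sim: "simulates (U, \<sigma>, \<tau>) (line_sys L) m R"
  have L: "0 < L"
    using assms(3) by simp
  have m: "0 < m"
    using simulates_scale_pos[OF sim] .
  obtain \<alpha>' \<beta>' where \<alpha>': "(step (U, \<sigma>, \<tau>))\<^sup>*\<^sup>* \<sigma> \<alpha>'" "nonempty_block m \<alpha>' 0"
      "dom \<alpha>' \<subseteq> {- int m ..< 2 * int m}"
    and \<beta>': "produces (U, \<sigma>, \<tau>) \<alpha>' \<beta>'" "Rstar m R \<beta>' = line_asm L (L - 1)"
    using line_sim_seed[OF assms(2) sim L] by blast
  obtain i where "\<alpha>' (int i) \<noteq> None"
    using \<alpha>'(2) unfolding nonempty_block_def by auto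
  then have y0: "int i \<in> dom \<alpha>'" "int i < 2 * int m"
    using \<alpha>'(3) by (auto simp: domIff)
  obtain \<beta> where \<beta>: "(step (U, \<sigma>, \<tau>))\<^sup>*\<^sup>* \<alpha>' \<beta>"
    and long: "{2 * int m .. 2 * int m + int (card U)} \<subseteq> dom \<beta>"
    using line_sim_long_stage[OF assms(2) sim L assms(3) \<alpha>'(1) \<beta>' y0] by blast
  have wf: "well_formed U \<tau> \<alpha>'"
    using rtranclp_step_well_formed[OF \<alpha>'(1) well_formed_seed[OF assms(2)]] .
  have fresh: "\<forall>y\<ge>2 * int m. \<alpha>' y = None"
    using \<alpha>'(3) by (auto simp: domIff)
  obtain \<gamma> where \<gamma>: "(step (U, \<sigma>, \<tau>))\<^sup>*\<^sup>* \<alpha>' \<gamma>" "{2 * int m .. int m * (int L + 1)} \<subseteq> dom \<gamma>"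
    using unbounded_growth[OF assms(1) \<beta>(1) wf y0 fresh long] by blast
  have "int m * 2 \<le> int m * (int L + 1)"
    using L by (intro mult_left_mono) simp_all
  then have "int m * (int L + 1) \<in> dom \<gamma>"
    using \<gamma>(2) by (simp add: subset_iff)
  then have "nonempty_block m \<gamma> (int L + 1)"
    using nonempty_block_div[OF m] m by fastforce
  moreover have "producible (U, \<sigma>, \<tau>) \<gamma>"
    using produces_if_rtranclp rtranclp_trans[OF \<alpha>'(1) \<gamma>(1)] unfolding producible_def by simp
  moreover have "nonempty_block m \<gamma> 0"
    using nonempty_block_map_le[OF rtranclp_step_map_le[OF \<gamma>(1)] \<alpha>'(2)] .
  ultimately show False
    using line_sim_no_far_block[OF assms(2) sim L] by blast
qed

theorem mainTheorem9:
  shows "\<not> (\<exists>(U :: tile set) (\<tau>' :: nat) (R :: tsys \<Rightarrow> nat \<times> rep) (S :: tsys \<Rightarrow> assembly).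
             finite U \<and>
             computable_on_directed R rep_code \<and>
             computable_on_directed S assembly_code \<and>
             (\<forall>\<T>. directed \<T> \<longrightarrow>
                valid_sys (U, S \<T>, \<tau>') \<and>
                simulates (U, S \<T>, \<tau>') \<T> (fst (R \<T>)) (snd (R \<T>))))"
proof (intro notI, elim exE conjE)
  fix U :: "tile set" and \<tau>' :: nat and R :: "tsys \<Rightarrow> nat \<times> rep" and S :: "tsys \<Rightarrow> assembly"
  assume "finite U" and sim: "\<forall>\<T>. directed \<T> \<longrightarrow>
    valid_sys (U, S \<T>, \<tau>') \<and> simulates (U, S \<T>, \<tau>') \<T> (fst (R \<T>)) (snd (R \<T>))"
  have "directed (line_sys (card U + 3))"
    by (simp add: directed_line_sys)
  then show False
    using sim line_sys_not_simulated[OF \<open>finite U\<close> _ order_refl] by blast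
qed

end
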